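(* Let $|q|<1$ and let $(\alpha_n(a,k,q),\beta_n(a,k,q))$ be a WP-Bailey pair. Assume $|qa|<|z|$, that no denominator vanishes, and that all series below converge absolutely. Then \begin{multline*} \sum_{n=1}^{\infty} \frac{(q\sqrt{k},-q\sqrt{k},z;q)_{n}(q;q)_{n-1}}{(\sqrt{k},-\sqrt{k}, q k,q k/z;q)_{n}}\left( \frac{q a}{ z }\right)^{n} \beta_n(a,k,q) - \sum_{n=1}^{\infty}\frac{(z;q)_{n}(q;q)_{n-1}}{(q a ,q a/z;q)_n}\left (\frac{q a}{z}\right)^{n}\alpha_n(a,k,q)\\ =\sum_{n=1}^{\infty} \frac{(q\sqrt{k},-q\sqrt{k},k,z,k/a;q)_{n}}{(\sqrt{k},-\sqrt{k}, q k,q k/z,q a;q)_{n}(1-q^n)}\left( \frac{q a}{z }\right )^{n}. \end{multline*}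
   Context: Notation: $(x;q)_n=(1-x)(1-xq)\cdots(1-xq^{n-1})$, $(x;q)_0=1$, $(x;q)_\infty=\prod_{j\ge0}(1-xq^j)$, and $(x_1,\dots,x_m;q)_n=(x_1;q)_n\cdots(x_m;q)_n$. A WP-Bailey pair (with parameters $a,k$ and base $q$) is a pair of sequences $(\alpha_n(a,k,q),\beta_n(a,k,q))_{n\ge0}$ with $\alpha_0=\beta_0=1$ and, for $n>0$, $$\beta_n(a,k,q)=\sum_{j=0}^{n}\frac{(k/a;q)_{n-j}(k;q)_{n+j}}{(q;q)_{n-j}(aq;q)_{n+j}}\alpha_j(a,k,q).$$ *)

theory Defs
  imports "HOL-Analysis.Analysis"
begin

definition qpoch :: "complex \<Rightarrow> complex \<Rightarrow> nat \<Rightarrow> complex" where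
  "qpoch x q n = (\<Prod>j<n. (1 - x * q ^ j))"

definition WP_Bailey_pair ::
  "complex \<Rightarrow> complex \<Rightarrow> complex \<Rightarrow> (nat \<Rightarrow> complex) \<Rightarrow> (nat \<Rightarrow> complex) \<Rightarrow> bool" where
  "WP_Bailey_pair a k q \<alpha> \<beta> \<longleftrightarrow>
     \<alpha> 0 = 1 \<and> \<beta> 0 = 1 \<and>
     (\<forall>n>0. \<beta> n = (\<Sum>j=0..n. qpoch (k/a) q (n-j) * qpoch k q (n+j)
                              / (qpoch q q (n-j) * qpoch (a*q) q (n+j)) * \<alpha> j))"

end

theory Submission
  imports Defs
begin

text \<open>Write \<open>E\<^sub>N\<close> and \<open>G\<^sub>j\<close> for the coefficients of \<open>\<beta>\<^sub>N\<close> and \<open>\<alpha>\<^sub>j\<close> on the left and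
  \<open>c\<^sub>N\<^sub>,\<^sub>j\<close> for the WP-Bailey kernel, so that \<open>\<beta>\<^sub>N = \<Sum>\<^sub>j c\<^sub>N\<^sub>,\<^sub>j \<alpha>\<^sub>j\<close>. The term \<open>j = 0\<close>
  of this expansion produces the right-hand side; after interchanging the order of summation the
  remaining terms give \<open>\<Sum>\<^sub>j \<alpha>\<^sub>j \<Sum>\<^sub>m T\<^sub>j\<^sub>,\<^sub>m\<close> with \<open>T\<^sub>j\<^sub>,\<^sub>m = E\<^sub>j\<^sub>+\<^sub>m c\<^sub>j\<^sub>+\<^sub>m\<^sub>,\<^sub>j\<close>, so it
  suffices that \<open>\<Sum>\<^sub>m T\<^sub>j\<^sub>,\<^sub>m = G\<^sub>j\<close> for \<open>j \<ge> 1\<close>. This is proved by induction on \<open>j\<close>: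
  \<open>T\<^sub>1\<^sub>,\<^sub>m\<close> telescopes, and with \<open>\<rho>\<^sub>j = G\<^sub>j\<^sub>+\<^sub>1 / G\<^sub>j\<close> so does \<open>T\<^sub>j\<^sub>+\<^sub>1\<^sub>,\<^sub>m - \<rho>\<^sub>j T\<^sub>j\<^sub>,\<^sub>m\<^sub>+\<^sub>1\<close>.
  The interchange is legitimate because \<open>|T\<^sub>j\<^sub>,\<^sub>m| \<le> C |G\<^sub>j| |qa/z|\<^sup>m\<close>, which follows from
  uniform bounds on \<open>(x;q)\<^sub>n\<close> and \<open>1/(x;q)\<^sub>n\<close> for \<open>|q| < 1\<close>.\<close>

section \<open>q-Pochhammer symbols\<close>

lemma qpoch_0 [simp]: "qpoch x q 0 = 1"
  by (simp add: qpoch_def)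

lemma qpoch_Suc: "qpoch x q (Suc n) = qpoch x q n * (1 - x * q ^ n)"
  by (simp add: qpoch_def)

lemma qpoch_add: "qpoch x q (m + n) = qpoch x q m * qpoch (x * q ^ m) q n"
  by (induction n) (simp_all add: qpoch_Suc power_add mult.assoc)

lemma qpoch_shift: "qpoch (q * x) q n * (1 - x) = qpoch x q n * (1 - x * q ^ n)"
proof (induction n)
  case (Suc n)
  have "qpoch (q * x) q (Suc n) * (1 - x) = (qpoch (q * x) q n * (1 - x)) * (1 - x * q ^ Suc n)"
    by (simp add: qpoch_Suc algebra_simps)
  also have "\<dots> = qpoch x q (Suc n) * (1 - x * q ^ Suc n)"
    using Suc by (simp add: qpoch_Suc)
  finally show ?case .
qed simp

lemma qpoch_Suc_left: "qpoch x q (Suc n) = (1 - x) * qpoch (q * x) q n"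
  using qpoch_shift[of q x n] by (simp add: qpoch_Suc mult.commute)

lemma qpoch_factor_nonzero: "(\<And>n. qpoch x q n \<noteq> 0) \<Longrightarrow> 1 - x * q ^ i \<noteq> 0"
  by (metis mult_eq_0_iff qpoch_Suc)

lemma qpoch_Suc_shifted: "qpoch (q * x) q (Suc n) = qpoch (q * x) q n * (1 - x * q ^ Suc n)"
  by (simp add: qpoch_Suc)

lemma power_Suc_double_add:
  fixes q :: "'a::comm_monoid_mult"
  shows "q ^ Suc (2 * j + m) = q ^ Suc (j + m) * q ^ j"
  by (simp only: mult_2 add_Suc[symmetric] power_add) (simp add: mult_ac)

lemma power_double_Suc:
  fixes q :: "'a::monoid_mult"
  shows "q ^ (2 * Suc n) = (q ^ Suc n)\<^sup>2"
  by (simp only: power_mult[symmetric] mult.commute)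

lemma qpoch_Suc_double_add:
  "qpoch x q (Suc (Suc (2 * j + m))) = qpoch x q (Suc (2 * j + m)) * (1 - x * q ^ Suc (j + m) * q ^ j)"
  by (simp only: qpoch_Suc[of x q "Suc (2 * j + m)"] power_Suc_double_add mult.assoc)

section \<open>Bounds and double series\<close>

lemma sum_power_le_geometric:
  fixes r :: real
  assumes "0 \<le> r" "r < 1"
  shows "(\<Sum>i<n. r ^ i) \<le> 1 / (1 - r)"
  using sum_le_suminf[of "\<lambda>i. r ^ i" "{..<n}"] geometric_sums[of r] assms
  by (simp add: sums_iff)

lemma norm_qpoch_le:
  assumes q: "norm q < 1" and x: "norm x \<le> R"
  shows "norm (qpoch x q n) \<le> exp (R / (1 - norm q))"
proof -
  have R: "R \<ge> 0" using x norm_ge_zero order_trans by blast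
  have "norm (qpoch x q n) = (\<Prod>i<n. norm (1 - x * q ^ i))"
    by (simp add: qpoch_def prod_norm)
  also have "\<dots> \<le> (\<Prod>i<n. exp (R * norm q ^ i))"
  proof (rule prod_mono, safe)
    fix i
    have "norm (1 - x * q ^ i) \<le> 1 + norm x * norm q ^ i"
      by (metis norm_triangle_ineq4 norm_mult norm_one norm_power)
    also have "\<dots> \<le> 1 + R * norm q ^ i"
      using x by (simp add: mult_right_mono)
    also have "\<dots> \<le> exp (R * norm q ^ i)" by (rule exp_ge_add_one_self)
    finally show "norm (1 - x * q ^ i) \<le> exp (R * norm q ^ i)" .
  qed simp
  also have "\<dots> = exp (R * (\<Sum>i<n. norm q ^ i))"
    by (simp add: exp_sum sum_distrib_left)
  also have "\<dots> \<le> exp (R / (1 - norm q))"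
    using mult_left_mono[OF sum_power_le_geometric R] q by simp
  finally show ?thesis .
qed

lemma prod_one_minus_ge:
  fixes t :: "nat \<Rightarrow> real"
  assumes "\<And>i. 0 \<le> t i" "\<And>i. t i \<le> 1"
  shows "1 - (\<Sum>i<n. t i) \<le> (\<Prod>i<n. 1 - t i)"
proof (induction n)
  case (Suc n)
  have "0 \<le> (\<Sum>i<n. t i)" using assms by (simp add: sum_nonneg)
  hence "1 - (\<Sum>i<Suc n. t i) \<le> (1 - (\<Sum>i<n. t i)) * (1 - t n)"
    using assms(1)[of n] by (simp add: algebra_simps)
  also have "\<dots> \<le> (\<Prod>i<Suc n. 1 - t i)"
    using Suc assms(2)[of n] by (simp add: mult_right_mono)
  finally show ?case .
qed simp

lemma norm_qpoch_ge_half: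
  assumes q: "norm q < 1" and y: "norm y / (1 - norm q) \<le> 1/2"
  shows "1/2 \<le> norm (qpoch y q n)"
proof -
  have "norm y \<le> norm y / (1 - norm q)"
    using q by (simp add: le_divide_eq mult_left_le)
  hence ny: "norm y \<le> 1"
    using y by linarith
  have t: "norm y * norm q ^ i \<le> 1" for i
    using ny q by (simp add: mult_le_one power_le_one)
  have "(\<Sum>i<n. norm y * norm q ^ i) \<le> norm y / (1 - norm q)"
    using mult_left_mono[OF sum_power_le_geometric] q by (simp add: sum_distrib_left)
  hence "1/2 \<le> 1 - (\<Sum>i<n. norm y * norm q ^ i)" using y by linarith
  also have "\<dots> \<le> (\<Prod>i<n. 1 - norm y * norm q ^ i)"
    by (rule prod_one_minus_ge) (simp_all add: t)
  also have "\<dots> \<le> (\<Prod>i<n. norm (1 - y * q ^ i))"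
  proof (rule prod_mono, safe)
    fix i
    show "0 \<le> 1 - norm y * norm q ^ i" using t[of i] by simp
    show "1 - norm y * norm q ^ i \<le> norm (1 - y * q ^ i)"
      by (metis norm_mult norm_one norm_power norm_triangle_ineq2)
  qed
  also have "\<dots> = norm (qpoch y q n)"
    by (simp add: qpoch_def prod_norm)
  finally show ?thesis .
qed

lemma qpoch_inverse_bounded:
  assumes q: "norm q < 1" and nz: "\<And>n. qpoch x q n \<noteq> 0"
  shows "\<exists>M. \<forall>n. norm (inverse (qpoch x q n)) \<le> M"
proof -
  have "(\<lambda>N. norm x * norm q ^ N / (1 - norm q)) \<longlonglongrightarrow> norm x * 0 / (1 - norm q)"
    by (intro tendsto_intros) (use q in auto)
  then obtain N where N: "norm x * norm q ^ N / (1 - norm q) \<le> 1/2"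
    by (metis (lifting) eventually_sequentially order_le_less order_tendstoD(2)
        div_0 half_gt_zero_iff mult_zero_right zero_less_one)
  define \<delta> where "\<delta> = Min ((\<lambda>n. norm (qpoch x q n)) ` {..N})"
  have \<delta>: "0 < \<delta>" unfolding \<delta>_def using nz by (subst Min_gr_iff) auto
  have \<delta>_le: "\<delta> \<le> norm (qpoch x q n)" if "n \<le> N" for n
    unfolding \<delta>_def using that by (intro Min_le) auto
  \<comment> \<open>Beyond N the factors are close to 1: split off the first N of them.\<close>
  have low: "\<delta> / 2 \<le> norm (qpoch x q n)" for n
  proof (cases "n \<le> N")
    case False
    then obtain m where n: "n = N + m" using le_Suc_ex nat_le_linear by blast
    have "1/2 \<le> norm (qpoch (x * q ^ N) q m)"
      by (rule norm_qpoch_ge_half) (use q N in \<open>auto simp: norm_mult norm_power\<close>)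
    with \<delta>_le[of N] \<delta> have "\<delta> * (1/2) \<le> norm (qpoch x q N) * norm (qpoch (x * q ^ N) q m)"
      by (intro mult_mono) auto
    thus ?thesis by (simp add: n qpoch_add norm_mult)
  qed (use \<delta>_le \<delta> in fastforce)
  have "norm (inverse (qpoch x q n)) \<le> 2 / \<delta>" for n
  proof -
    have "norm (inverse (qpoch x q n)) = 1 / norm (qpoch x q n)"
      by (simp add: norm_inverse divide_inverse)
    also have "\<dots> \<le> 1 / (\<delta> / 2)"
      using low[of n] \<delta> by (intro divide_left_mono mult_pos_pos) auto
    finally show ?thesis by simp
  qed
  thus ?thesis by blast
qed

lemma norm_mult_le_mult:
  fixes x y :: "'a::real_normed_div_algebra"
  shows "norm x \<le> X \<Longrightarrow> norm y \<le> Y \<Longrightarrow> norm (x * y) \<le> X * Y"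
  by (simp add: norm_mult mult_mono' order_trans[OF norm_ge_zero])

lemma norm_divide_le_mult:
  fixes x y :: "'a::real_normed_field"
  shows "norm x \<le> X \<Longrightarrow> norm (inverse y) \<le> Y \<Longrightarrow> norm (x / y) \<le> X * Y"
  by (simp add: divide_inverse norm_mult_le_mult)

lemma norm_inverse_mult_le_mult:
  fixes x y :: "'a::real_normed_field"
  shows "norm (inverse x) \<le> X \<Longrightarrow> norm (inverse y) \<le> Y \<Longrightarrow> norm (inverse (x * y)) \<le> X * Y"
  by (simp add: inverse_mult_distrib norm_mult_le_mult mult.commute)

lemma norm_power_le_power:
  fixes x :: "'a::real_normed_div_algebra"
  shows "norm x \<le> X \<Longrightarrow> norm (x ^ n) \<le> X ^ n"
  by (simp add: norm_power power_mono)

lemmas norm_le_mult_intros =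
  norm_mult_le_mult norm_divide_le_mult norm_inverse_mult_le_mult norm_power_le_power

lemma geometric_bound_tendsto_zero:
  fixes f :: "nat \<Rightarrow> 'a::real_normed_vector"
  assumes "\<And>n. norm (f n) \<le> C * r ^ n" and "0 \<le> r" "r < 1"
  shows "f \<longlonglongrightarrow> 0"
proof (rule Lim_null_comparison)
  show "\<forall>\<^sub>F n in sequentially. norm (f n) \<le> C * r ^ n"
    using assms(1) by simp
  show "(\<lambda>n. C * r ^ n) \<longlonglongrightarrow> 0"
    by (intro tendsto_mult_right_zero LIMSEQ_power_zero) (use assms in auto)
qed

lemma norm_one_minus_mult_power_le:
  fixes k q :: "'a::real_normed_div_algebra"
  assumes "norm q \<le> 1"
  shows "norm (1 - k * q ^ n) \<le> 1 + norm k"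
proof -
  have "norm (1 - k * q ^ n) \<le> norm (1::'a) + norm (k * q ^ n)"
    by (rule norm_triangle_ineq4)
  also have "norm (k * q ^ n) \<le> norm k"
    using assms by (simp add: norm_mult norm_power power_le_one mult_left_le)
  finally show ?thesis by simp
qed

lemma delayed_series_geometric_bound:
  fixes f :: "nat \<Rightarrow> 'a::banach" and i :: nat
  assumes f: "f sums s" and bound: "\<And>m. norm (f m) \<le> B * r ^ m" and r: "0 \<le> r" "r < 1"
  defines "g \<equiv> \<lambda>n. if i \<le> n then f (n - i) else 0"
  shows "g sums s" and "summable (\<lambda>n. norm (g n))" and "(\<Sum>n. norm (g n)) \<le> B / (1 - r)"
proof -
  have shift: "g (m + i) = f m" for m
    by (simp add: g_def)
  have zero: "g n = 0" if "n < i" for n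
    using that by (simp add: g_def)
  show "g sums s"
    using f sums_zero_iff_shift[of i g s] by (simp add: shift zero)
  have geometric: "(\<lambda>m. B * r ^ m) sums (B / (1 - r))"
    using sums_mult[OF geometric_sums[of r], of B] r by simp
  have "summable (\<lambda>m. norm (f m))"
    by (rule summable_comparison_test[OF _ sums_summable[OF geometric]]) (simp add: bound)
  then show summable: "summable (\<lambda>n. norm (g n))"
    using summable_iff_shift[of "\<lambda>n. norm (g n)" i] by (simp add: shift)
  have "(\<Sum>n. norm (g n)) = (\<Sum>m. norm (f m))"
    using suminf_split_initial_segment[OF summable, of i] by (simp add: shift zero)
  also have "\<dots> \<le> B / (1 - r)"
    using suminf_le[OF bound \<open>summable (\<lambda>m. norm (f m))\<close> sums_summable[OF geometric]]
      geometric by (simp add: sums_iff)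
  finally show "(\<Sum>n. norm (g n)) \<le> B / (1 - r)" .
qed

lemma triangular_double_series_sums:
  fixes p :: "nat \<Rightarrow> nat \<Rightarrow> 'a::banach"
  assumes triangular: "\<And>i n. n < i \<Longrightarrow> p i n = 0"
    and rows: "\<And>i. p i sums s i"
    and rows_abs: "\<And>i. summable (\<lambda>n. norm (p i n))"
    and dominated: "summable (\<lambda>i. \<Sum>n. norm (p i n))"
  shows "(\<lambda>n. \<Sum>i\<le>n. p i n) sums (\<Sum>i. s i)"
proof -
  have "(\<lambda>x. norm ((\<lambda>(i, n). p i n) x)) summable_on UNIV \<times> UNIV"
  proof (rule Infinite_Sum.abs_summable_on_Sigma_iff[THEN iffD2], intro conjI ballI)
    show "(\<lambda>n. norm (case (i, n) of (i, n) \<Rightarrow> p i n)) summable_on UNIV" for i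
      using rows_abs[of i] by (simp add: norm_summable_imp_summable_on)
    have "infsum (\<lambda>n. norm (p i n)) UNIV = (\<Sum>n. norm (p i n))" for i
      using rows_abs[of i] by (intro infsumI norm_summable_imp_has_sum) (auto intro: summable_sums)
    moreover have "norm (\<Sum>n. norm (p i n)) = (\<Sum>n. norm (p i n))" for i
      using suminf_nonneg[OF rows_abs[of i]] by simp
    ultimately show "(\<lambda>i. norm (infsum (\<lambda>n. norm (case (i, n) of (i, n) \<Rightarrow> p i n)) UNIV)) summable_on UNIV"
      using dominated norm_summable_imp_summable_on[of "\<lambda>i. norm (\<Sum>n. norm (p i n))"] by simp
  qed
  then obtain S where S: "((\<lambda>(i, n). p i n) has_sum S) (UNIV \<times> UNIV)"
    using Infinite_Sum.abs_summable_summable summable_on_def by blast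
  have "(s has_sum S) UNIV"
    by (rule has_sum_SigmaD[OF S]) (simp add: norm_summable_imp_has_sum rows rows_abs)
  hence s: "(\<Sum>i. s i) = S"
    using has_sum_imp_sums sums_unique by metis
  from S have "((\<lambda>(n, i). p i n) has_sum S) (UNIV \<times> UNIV)"
    by (subst has_sum_swap) simp
  hence "((\<lambda>n. \<Sum>i\<le>n. p i n) has_sum S) UNIV"
  proof (rule has_sum_SigmaD)
    show "((\<lambda>i. case (n, i) of (n, i) \<Rightarrow> p i n) has_sum (\<Sum>i\<le>n. p i n)) UNIV" for n
      by (rule has_sum_finite_neutralI[of "{..n}"]) (auto simp: triangular)
  qed
  thus ?thesis
    using s has_sum_imp_sums by simp
qed

lemma qpoch_well_poised_ratio:
  fixes u q :: complex
  assumes "qpoch u q N \<noteq> 0" "qpoch (- u) q N \<noteq> 0" "1 - u \<noteq> 0" "1 + u \<noteq> 0"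
  shows "qpoch (q * u) q N * qpoch (- q * u) q N / (qpoch u q N * qpoch (- u) q N)
    = (1 - u\<^sup>2 * q ^ (2 * N)) / (1 - u\<^sup>2)"
proof -
  have plus: "qpoch (q * u) q N = qpoch u q N * (1 - u * q ^ N) / (1 - u)"
    using qpoch_shift[of q u N] assms(3) by (simp add: field_simps)
  have minus: "qpoch (- q * u) q N = qpoch (- u) q N * (1 + u * q ^ N) / (1 + u)"
    using qpoch_shift[of q "- u" N] assms(4) by (simp add: field_simps)
  have "P * X / U1 * (R * Y / U2) / (P * R) = (X * Y) / (U1 * U2)"
    if "P \<noteq> 0" "R \<noteq> 0" "U1 \<noteq> 0" "U2 \<noteq> 0" for P R X Y U1 U2 :: complex
    using that by (simp add: field_simps)
  then have "qpoch (q * u) q N * qpoch (- q * u) q N / (qpoch u q N * qpoch (- u) q N)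
      = ((1 - u * q ^ N) * (1 + u * q ^ N)) / ((1 - u) * (1 + u))"
    unfolding plus minus using assms by simp
  also have "\<dots> = (1 - u\<^sup>2 * q ^ (2 * N)) / (1 - u\<^sup>2)"
    by (simp add: algebra_simps power2_eq_square power_mult)
  finally show ?thesis .
qed

lemma base_telescoping_numerator:
  fixes a k q z :: "'a::comm_ring_1"
  shows "(1 - k * q ^ (2 * Suc m)) * (z - q * a)
    = (z - k * q ^ Suc m) * (1 - a * q * q ^ Suc m) - (1 - z * q ^ Suc m) * (a - k * q ^ m) * q"
proof -
  have double: "q ^ (2 * Suc m) = (q * q ^ m) * (q * q ^ m)"
    by (simp only: mult_2 power_add power_Suc)
  show ?thesis
    unfolding double by (simp add: algebra_simps)
qed

text \<open>After cancelling the common factor \<open>telescoper_core j m\<close> (with \<open>Y = q\<^sup>j\<close>, \<open>M = q\<^sup>m\<close>),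
  the step identity \<open>inner_term_step_telescopes\<close> is this identity of rational functions.\<close>

lemma telescoping_rational_identity:
  fixes a k q z Y M X D1 D2 D3 D4 D5 D6 :: complex
  assumes X: "X = q * Y * M"
    and D: "D1 = 1 - k*X" "D2 = z - k*X" "D3 = 1 - a*q*X*Y" "D4 = 1 - q*M" "D5 = 1 - a*q*Y"
      "D6 = z - a*q*Y"
    and nz: "a \<noteq> 0" "D1 \<noteq> 0" "D2 \<noteq> 0" "D3 \<noteq> 0" "D4 \<noteq> 0" "D5 \<noteq> 0" "D6 \<noteq> 0"
  shows "(1-k*X^2)*z/(D1*D2) * ((1-k*X*Y)/D3)
     - (1-z*Y)*(1-Y)*q*a/(D5*D6) * ((1-k*X^2)*z/(D1*D2) * ((a-k*M)/(a*D4)))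
   = -(1-a*q*Y*Y)*z/(D5*D6) * ((1-z*X)*(1-X)*q*(a-k*M)*(1-k*X*Y)/(D1*D2*D4*D3))
     - (-(1-a*q*Y*Y)*z/(D5*D6))"
proof -
  have poly: "(1-k*X^2)*((1-k*X*Y)*D4*D5*D6-(1-z*Y)*(1-Y)*q*(a-k*M)*D3)
    = -(1-a*q*Y*Y)*((1-z*X)*(1-X)*q*(a-k*M)*(1-k*X*Y)-D1*D2*D3*D4)"
    unfolding D X by (simp add: algebra_simps power2_eq_square)
  define Den where "Den = D1*D2*D3*D4*D5*D6*a"
  have Den: "Den \<noteq> 0" using nz by (simp add: Den_def)
  have L: "((1-k*X^2)*z/(D1*D2) * ((1-k*X*Y)/D3)
      - (1-z*Y)*(1-Y)*q*a/(D5*D6) * ((1-k*X^2)*z/(D1*D2) * ((a-k*M)/(a*D4)))) * Den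
    = (1-k*X^2)*z*(1-k*X*Y)*D4*D5*D6*a - (1-z*Y)*(1-Y)*q*a*(1-k*X^2)*z*(a-k*M)*D3"
    using nz unfolding Den_def by (simp add: field_simps)
  have R: "(-(1-a*q*Y*Y)*z/(D5*D6) * ((1-z*X)*(1-X)*q*(a-k*M)*(1-k*X*Y)/(D1*D2*D4*D3))
      - (-(1-a*q*Y*Y)*z/(D5*D6))) * Den
    = -(1-a*q*Y*Y)*z*(1-z*X)*(1-X)*q*(a-k*M)*(1-k*X*Y)*a - -(1-a*q*Y*Y)*z*D1*D2*D3*D4*a"
    using nz unfolding Den_def by (simp add: field_simps)
  have "(1-k*X^2)*z*(1-k*X*Y)*D4*D5*D6*a - (1-z*Y)*(1-Y)*q*a*(1-k*X^2)*z*(a-k*M)*D3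
      = -(1-a*q*Y*Y)*z*(1-z*X)*(1-X)*q*(a-k*M)*(1-k*X*Y)*a - -(1-a*q*Y*Y)*z*D1*D2*D3*D4*a"
    using arg_cong[OF poly, of "\<lambda>t. a * z * t"] by (simp add: algebra_simps)
  with L R Den show ?thesis
    by (metis mult_cancel_right)
qed

section \<open>Evaluation of the inner series\<close>

locale wp_parameters =
  fixes a k q z :: complex
  assumes norm_q: "norm q < 1"
    and norm_qa_less: "norm (q * a) < norm z"
    and a_nonzero: "a \<noteq> 0"
    and qpoch_q_nonzero: "\<And>n. qpoch q q n \<noteq> 0"
    and qpoch_aq_nonzero: "\<And>n. qpoch (a * q) q n \<noteq> 0"
    and qpoch_sqrt_nonzero: "\<And>n. qpoch (csqrt k) q n \<noteq> 0"
    and qpoch_neg_sqrt_nonzero: "\<And>n. qpoch (- csqrt k) q n \<noteq> 0"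
    and qpoch_qk_nonzero: "\<And>n. qpoch (q * k) q n \<noteq> 0"
    and qpoch_qkz_nonzero: "\<And>n. qpoch (q * k / z) q n \<noteq> 0"
    and qpoch_qaz_nonzero: "\<And>n. qpoch (q * a / z) q n \<noteq> 0"
begin

text \<open>\<open>beta_weight N\<close> and \<open>alpha_weight j\<close> are the coefficients of \<open>\<beta> N\<close> and \<open>\<alpha> j\<close> in the
  theorem, with \<open>(q\<surd>k, -q\<surd>k; q)\<^sub>N / (\<surd>k, -\<surd>k; q)\<^sub>N\<close> written as \<open>(1 - k q\<^sup>2\<^sup>N) / (1 - k)\<close>;
  \<open>wp_kernel N j\<close> is the coefficient of \<open>\<alpha> j\<close> in \<open>\<beta> N\<close>.\<close>

definition beta_weight :: "nat \<Rightarrow> complex" where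
  "beta_weight N = (1 - k * q ^ (2 * N)) / (1 - k) * qpoch z q N * qpoch q q (N - 1)
     / (qpoch (q * k) q N * qpoch (q * k / z) q N) * (q * a / z) ^ N"

definition alpha_weight :: "nat \<Rightarrow> complex" where
  "alpha_weight j = qpoch z q j * qpoch q q (j - 1)
     / (qpoch (q * a) q j * qpoch (q * a / z) q j) * (q * a / z) ^ j"

definition wp_kernel :: "nat \<Rightarrow> nat \<Rightarrow> complex" where
  "wp_kernel N j = qpoch (k / a) q (N - j) * qpoch k q (N + j)
     / (qpoch q q (N - j) * qpoch (a * q) q (N + j))"

definition inner_term :: "nat \<Rightarrow> nat \<Rightarrow> complex" where
  "inner_term j m = beta_weight (j + m) * wp_kernel (j + m) j"

definition alpha_weight_ratio :: "nat \<Rightarrow> complex" where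
  "alpha_weight_ratio j = (1 - z * q ^ j) * (1 - q ^ j) * q * a / ((1 - a * q * q ^ j) * (z - a * q * q ^ j))"

definition base_telescoper :: "nat \<Rightarrow> complex" where
  "base_telescoper n = qpoch z q n * qpoch (k / a) q (n - 1) * (q * a / z) ^ n
     / (qpoch (q * k / z) q (n - 1) * qpoch (a * q) q n * (1 - q * a / z))"

definition telescoper_core :: "nat \<Rightarrow> nat \<Rightarrow> complex" where
  "telescoper_core j m = qpoch z q (Suc (j + m)) * qpoch q q (j + m) * (q * a / z) ^ Suc (j + m)
     / ((1 - k) * qpoch (q * k) q (j + m) * qpoch (q * k / z) q (j + m))
     * qpoch (k / a) q m * qpoch k q (Suc (2 * j + m)) / (qpoch q q m * qpoch (a * q) q (Suc (2 * j + m)))"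

definition step_telescoper :: "nat \<Rightarrow> nat \<Rightarrow> complex" where
  "step_telescoper j m = - (1 - a * q * q ^ j * q ^ j) * z / ((1 - a * q * q ^ j) * (z - a * q * q ^ j))
     * telescoper_core j m"

lemma z_nonzero: "z \<noteq> 0"
  using norm_qa_less by auto

lemma z_minus_qa_nonzero: "z - q * a \<noteq> 0"
  using norm_qa_less by auto

lemma qpoch_qa_nonzero: "qpoch (q * a) q n \<noteq> 0"
  using qpoch_aq_nonzero by (simp add: mult.commute)

lemma sqrt_factors_nonzero: "1 - csqrt k \<noteq> 0" "1 + csqrt k \<noteq> 0"
  using qpoch_sqrt_nonzero[of 1] qpoch_neg_sqrt_nonzero[of 1] by (simp_all add: qpoch_def)

lemma k_ne_1: "1 - k \<noteq> 0"
proof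
  assume "1 - k = 0"
  hence "(1 - csqrt k) * (1 + csqrt k) = 0"
    by (simp add: algebra_simps power2_eq_square[symmetric])
  thus False using sqrt_factors_nonzero by simp
qed

lemma factor_qk_nonzero: "1 - k * q ^ Suc n \<noteq> 0"
  using qpoch_factor_nonzero[OF qpoch_qk_nonzero, of n] by (simp add: mult_ac)

lemma factor_qkz_nonzero: "z - k * q ^ Suc n \<noteq> 0"
  using qpoch_factor_nonzero[OF qpoch_qkz_nonzero, of n] z_nonzero
  by (auto simp: field_simps)

lemma factor_q_nonzero: "1 - q * q ^ n \<noteq> 0"
  using qpoch_factor_nonzero[OF qpoch_q_nonzero, of n] by simp

lemma factor_aq_nonzero: "1 - a * q * q ^ n \<noteq> 0"
  using qpoch_factor_nonzero[OF qpoch_aq_nonzero, of n] by simp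

lemma factor_qaz_nonzero: "z - a * q * q ^ n \<noteq> 0"
  using qpoch_factor_nonzero[OF qpoch_qaz_nonzero, of n] z_nonzero
  by (auto simp: field_simps)

lemma factor_aq_shift_nonzero: "1 - a * q * q ^ Suc (j + m) * q ^ j \<noteq> 0"
  using factor_aq_nonzero[of "Suc (j + m) + j"] by (simp add: power_add mult_ac)

lemma qpoch_qkz_Suc: "qpoch (q * k / z) q (Suc n) = qpoch (q * k / z) q n * ((z - k * q ^ Suc n) / z)"
  using z_nonzero by (simp add: qpoch_Suc field_simps)

lemma qpoch_ka_Suc: "qpoch (k / a) q (Suc m) = qpoch (k / a) q m * ((a - k * q ^ m) / a)"
  using a_nonzero by (simp add: qpoch_Suc field_simps)

lemma inner_term_Suc_left:
  "inner_term (Suc j) m = telescoper_core j m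
     * ((1 - k * (q ^ Suc (j + m))\<^sup>2) * z / ((1 - k * q ^ Suc (j + m)) * (z - k * q ^ Suc (j + m)))
        * ((1 - k * q ^ Suc (j + m) * q ^ j) / (1 - a * q * q ^ Suc (j + m) * q ^ j)))"
  (is "_ = ?rhs")
proof -
  have "inner_term (Suc j) m = (1 - k * q ^ (2 * Suc (j + m))) / (1 - k) * qpoch z q (Suc (j + m))
      * qpoch q q (j + m) / (qpoch (q * k) q (Suc (j + m)) * qpoch (q * k / z) q (Suc (j + m)))
      * (q * a / z) ^ Suc (j + m)
      * (qpoch (k / a) q m * qpoch k q (Suc (Suc (2 * j + m)))
         / (qpoch q q m * qpoch (a * q) q (Suc (Suc (2 * j + m)))))"
    unfolding inner_term_def beta_weight_def wp_kernel_def by (simp add: mult_2 add_ac)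
  also have "\<dots> = ?rhs"
    unfolding qpoch_Suc_double_add qpoch_qkz_Suc qpoch_Suc_shifted power_double_Suc telescoper_core_def
    using qpoch_qk_nonzero qpoch_qkz_nonzero qpoch_q_nonzero qpoch_aq_nonzero k_ne_1 z_nonzero
      factor_qk_nonzero factor_qkz_nonzero factor_aq_shift_nonzero
    by (simp add: field_simps)
  finally show ?thesis .
qed

lemma inner_term_Suc_right:
  "inner_term j (Suc m) = telescoper_core j m
     * ((1 - k * (q ^ Suc (j + m))\<^sup>2) * z / ((1 - k * q ^ Suc (j + m)) * (z - k * q ^ Suc (j + m)))
        * ((a - k * q ^ m) / (a * (1 - q * q ^ m))))"
  (is "_ = ?rhs")
proof -
  have "inner_term j (Suc m) = (1 - k * q ^ (2 * Suc (j + m))) / (1 - k) * qpoch z q (Suc (j + m))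
      * qpoch q q (j + m) / (qpoch (q * k) q (Suc (j + m)) * qpoch (q * k / z) q (Suc (j + m)))
      * (q * a / z) ^ Suc (j + m)
      * (qpoch (k / a) q (Suc m) * qpoch k q (Suc (2 * j + m))
         / (qpoch q q (Suc m) * qpoch (a * q) q (Suc (2 * j + m))))"
    unfolding inner_term_def beta_weight_def wp_kernel_def by (simp add: mult_2 add_ac)
  also have "\<dots> = ?rhs"
    unfolding qpoch_ka_Suc qpoch_qkz_Suc qpoch_Suc_shifted power_double_Suc telescoper_core_def
    using qpoch_qk_nonzero qpoch_qkz_nonzero qpoch_q_nonzero qpoch_aq_nonzero k_ne_1 z_nonzero
      a_nonzero factor_qk_nonzero factor_qkz_nonzero factor_q_nonzero
    by (simp add: qpoch_Suc[of q q m] field_simps)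
  finally show ?thesis .
qed

lemma telescoper_core_Suc:
  "telescoper_core j (Suc m) = telescoper_core j m
     * ((1 - z * q ^ Suc (j + m)) * (1 - q ^ Suc (j + m)) * q * (a - k * q ^ m) * (1 - k * q ^ Suc (j + m) * q ^ j)
        / ((1 - k * q ^ Suc (j + m)) * (z - k * q ^ Suc (j + m)) * (1 - q * q ^ m)
           * (1 - a * q * q ^ Suc (j + m) * q ^ j)))"
  (is "_ = _ * ?ratio")
proof -
  \<comment> \<open>Stated for opaque factors: \<open>field_simps\<close> applied to the q-Pochhammer expressions
    themselves expands the powers of \<open>q\<close> and does not finish.\<close>
  have field_identity: "(Az*B1) * (Aq*B2) * (W*(q*a/z)) / (K1 * (Ak*B3) * (Akz*(B4/z)))
        * (Aka*(B5/a)) * (Akk*B6) / ((Aq2*B7) * (Aaq*B8))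
      = Az*Aq*W/(K1*Ak*Akz) * Aka*Akk/(Aq2*Aaq) * (B1*B2*q*B5*B6/(B3*B4*B7*B8))"
    if "K1 \<noteq> 0" "Ak \<noteq> 0" "Akz \<noteq> 0" "Aq2 \<noteq> 0" "Aaq \<noteq> 0" "B3 \<noteq> 0" "B4 \<noteq> 0" "B7 \<noteq> 0" "B8 \<noteq> 0"
    for K1 Az Aq Ak Akz Aka Akk Aq2 Aaq W B1 B2 B3 B4 B5 B6 B7 B8 :: complex
    using that z_nonzero a_nonzero by (simp add: field_simps)
  have "telescoper_core j (Suc m) = qpoch z q (Suc (j + m)) * (1 - z * q ^ Suc (j + m))
      * (qpoch q q (j + m) * (1 - q ^ Suc (j + m))) * ((q * a / z) ^ Suc (j + m) * (q * a / z))
      / ((1 - k) * (qpoch (q * k) q (j + m) * (1 - k * q ^ Suc (j + m)))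
         * (qpoch (q * k / z) q (j + m) * ((z - k * q ^ Suc (j + m)) / z)))
      * (qpoch (k / a) q m * ((a - k * q ^ m) / a))
      * (qpoch k q (Suc (2 * j + m)) * (1 - k * q ^ Suc (j + m) * q ^ j))
      / ((qpoch q q m * (1 - q * q ^ m))
         * (qpoch (a * q) q (Suc (2 * j + m)) * (1 - a * q * q ^ Suc (j + m) * q ^ j)))"
    unfolding telescoper_core_def add_Suc_right qpoch_Suc_double_add qpoch_ka_Suc qpoch_qkz_Suc
      qpoch_Suc_shifted
    by (simp only: qpoch_Suc[of z q "Suc (j + m)"] qpoch_Suc[of q q "j + m"] qpoch_Suc[of q q m]
        power_Suc2 power_Suc[symmetric])
  also have "\<dots> = telescoper_core j m * ?ratio"
    unfolding telescoper_core_def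
    by (rule field_identity)
      (use qpoch_qk_nonzero qpoch_qkz_nonzero qpoch_q_nonzero qpoch_aq_nonzero k_ne_1
        factor_qk_nonzero factor_qkz_nonzero factor_q_nonzero factor_aq_shift_nonzero in simp_all)
  finally show ?thesis .
qed

lemma inner_term_step_telescopes:
  "inner_term (Suc j) m - alpha_weight_ratio j * inner_term j (Suc m)
     = step_telescoper j (Suc m) - step_telescoper j m"
proof -
  have linear: "P * r1 - \<rho> * (P * r2) = K * (P * r3) - K * P"
    if "r1 - \<rho> * r2 = K * r3 - K" for P r1 r2 r3 \<rho> K :: complex
    using arg_cong[OF that, of "\<lambda>t. P * t"] by (simp add: algebra_simps)
  have "q ^ Suc (j + m) = q * q ^ j * q ^ m"
    by (simp add: power_add)
  then have "(1 - k * (q ^ Suc (j + m))\<^sup>2) * z / ((1 - k * q ^ Suc (j + m)) * (z - k * q ^ Suc (j + m)))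
       * ((1 - k * q ^ Suc (j + m) * q ^ j) / (1 - a * q * q ^ Suc (j + m) * q ^ j))
     - (1 - z * q ^ j) * (1 - q ^ j) * q * a / ((1 - a * q * q ^ j) * (z - a * q * q ^ j))
       * ((1 - k * (q ^ Suc (j + m))\<^sup>2) * z / ((1 - k * q ^ Suc (j + m)) * (z - k * q ^ Suc (j + m)))
          * ((a - k * q ^ m) / (a * (1 - q * q ^ m))))
   = - (1 - a * q * q ^ j * q ^ j) * z / ((1 - a * q * q ^ j) * (z - a * q * q ^ j))
       * ((1 - z * q ^ Suc (j + m)) * (1 - q ^ Suc (j + m)) * q * (a - k * q ^ m)
          * (1 - k * q ^ Suc (j + m) * q ^ j)
          / ((1 - k * q ^ Suc (j + m)) * (z - k * q ^ Suc (j + m)) * (1 - q * q ^ m)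
             * (1 - a * q * q ^ Suc (j + m) * q ^ j)))
     - (- (1 - a * q * q ^ j * q ^ j) * z / ((1 - a * q * q ^ j) * (z - a * q * q ^ j)))"
    by (rule telescoping_rational_identity[OF _ refl refl refl refl refl refl])
      (use a_nonzero factor_qk_nonzero factor_qkz_nonzero factor_aq_shift_nonzero factor_q_nonzero
        factor_aq_nonzero factor_qaz_nonzero in auto)
  from linear[OF this, of "telescoper_core j m"] show ?thesis
    unfolding inner_term_Suc_left inner_term_Suc_right telescoper_core_Suc step_telescoper_def
      alpha_weight_ratio_def
    by (simp only: mult.assoc)
qed

lemma step_telescoper_0:
  "step_telescoper (Suc i) 0 = - alpha_weight_ratio (Suc i) * inner_term (Suc i) 0"
proof -
  define j where "j = Suc i"
  have field_identity:
    "-B4*z/(D5*D6) * ((Az*B1) * (Aq*B2) * (W*(q*a/z)) / (K1 * Ak * Akz) * 1 * (Akk*B3) / (1 * (Aaq*B4)))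
      = - (B1*B2*q*a/(D5*D6)) * (B3/K1 * Az * Aq/(Ak*Akz) * W * (1 * Akk/(1*Aaq)))"
    if "K1 \<noteq> 0" "Ak \<noteq> 0" "Akz \<noteq> 0" "Aaq \<noteq> 0" "B4 \<noteq> 0" "D5 \<noteq> 0" "D6 \<noteq> 0"
    for K1 Az Aq Ak Akz Akk Aaq W B1 B2 B3 B4 D5 D6 :: complex
    using that z_nonzero by (simp add: field_simps)
  have double: "q ^ (2 * j) = q ^ j * q ^ j"
    by (simp add: mult_2 power_add)
  have e1: "qpoch z q (Suc j) = qpoch z q j * (1 - z * q ^ j)"
    by (simp add: qpoch_Suc)
  have e2: "qpoch q q j = qpoch q q i * (1 - q ^ j)"
    by (simp add: j_def qpoch_Suc)
  have e3: "qpoch k q (Suc (2 * j)) = qpoch k q (2 * j) * (1 - k * q ^ j * q ^ j)"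
    by (simp only: qpoch_Suc double mult.assoc)
  have e4: "qpoch (a * q) q (Suc (2 * j)) = qpoch (a * q) q (2 * j) * (1 - a * q * q ^ j * q ^ j)"
    by (simp only: qpoch_Suc double mult.assoc)
  have "step_telescoper j 0 = - (1 - a * q * q ^ j * q ^ j) * z / ((1 - a * q * q ^ j) * (z - a * q * q ^ j))
      * ((qpoch z q j * (1 - z * q ^ j)) * (qpoch q q i * (1 - q ^ j)) * ((q * a / z) ^ j * (q * a / z))
         / ((1 - k) * qpoch (q * k) q j * qpoch (q * k / z) q j)
         * 1 * (qpoch k q (2 * j) * (1 - k * q ^ j * q ^ j))
         / (1 * (qpoch (a * q) q (2 * j) * (1 - a * q * q ^ j * q ^ j))))"
    unfolding step_telescoper_def telescoper_core_def add_0_right qpoch_0 e1 e2 e3 e4 power_Suc2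
    by (rule refl)
  also have "\<dots> = - alpha_weight_ratio j * ((1 - k * q ^ j * q ^ j) / (1 - k) * qpoch z q j * qpoch q q i
      / (qpoch (q * k) q j * qpoch (q * k / z) q j) * (q * a / z) ^ j
      * (1 * qpoch k q (2 * j) / (1 * qpoch (a * q) q (2 * j))))"
    unfolding alpha_weight_ratio_def
    by (rule field_identity)
      (use k_ne_1 qpoch_qk_nonzero qpoch_qkz_nonzero qpoch_aq_nonzero factor_aq_nonzero
        factor_aq_nonzero[of "2 * j"] factor_qaz_nonzero in \<open>simp_all add: double mult.assoc\<close>)
  also have "\<dots> = - alpha_weight_ratio j * inner_term j 0"
    unfolding inner_term_def beta_weight_def wp_kernel_def by (simp add: j_def mult_2 power_add)
  finally show ?thesis by (simp add: j_def)
qed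

lemma alpha_weight_Suc: "alpha_weight (Suc j) = alpha_weight_ratio j * alpha_weight j"
  if "j > 0"
proof -
  obtain i where j: "j = Suc i" using \<open>j > 0\<close> gr0_implies_Suc by blast
  have field_identity: "(Az*B1) * (Aq*B2) / ((Aa*D5) * (Aaz*(D6/z))) * (W*(q*a/z))
      = B1*B2*q*a/(D5*D6) * (Az * Aq / (Aa * Aaz) * W)"
    if "Aa \<noteq> 0" "Aaz \<noteq> 0" "D5 \<noteq> 0" "D6 \<noteq> 0" for Az Aq Aa Aaz W B1 B2 D5 D6 :: complex
    using that z_nonzero by (simp add: field_simps)
  have e1: "qpoch z q (Suc j) = qpoch z q j * (1 - z * q ^ j)"
    by (simp add: qpoch_Suc)
  have e2: "qpoch q q j = qpoch q q i * (1 - q ^ j)"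
    by (simp add: j qpoch_Suc)
  have e3: "qpoch (q * a) q (Suc j) = qpoch (q * a) q j * (1 - a * q * q ^ j)"
    by (simp add: qpoch_Suc mult_ac)
  have e4: "qpoch (q * a / z) q (Suc j) = qpoch (q * a / z) q j * ((z - a * q * q ^ j) / z)"
    using z_nonzero by (simp add: qpoch_Suc field_simps)
  show ?thesis
    unfolding alpha_weight_def diff_Suc_1 e1 e2 e3 e4 power_Suc2 alpha_weight_ratio_def
    by (simp only: j diff_Suc_1, rule field_identity)
      (use qpoch_qa_nonzero qpoch_qaz_nonzero factor_aq_nonzero[of j] factor_qaz_nonzero[of j] j
        in simp_all)
qed

lemma base_telescoper_1: "base_telescoper 1 = alpha_weight 1"
  by (simp add: base_telescoper_def alpha_weight_def qpoch_Suc mult_ac)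

lemma inner_term_1: "inner_term 1 m = base_telescoper (Suc m) - base_telescoper (Suc (Suc m))"
proof -
  have field_identity: "C1/K1 * Az * Aq/(Ak*(Akz*(Bz/z))) * W * (Aka*(K1*Ak)/(Aq*(Aaq*Ba)))
      = Az*Aka*W/(Akz*Aaq*(Zq/z)) - (Az*B1)*(Aka*(B5/a))*(W*(q*a/z))/((Akz*(Bz/z))*(Aaq*Ba)*(Zq/z))"
    if "K1 \<noteq> 0" "Ak \<noteq> 0" "Aq \<noteq> 0" "Akz \<noteq> 0" "Aaq \<noteq> 0" "Bz \<noteq> 0" "Ba \<noteq> 0" "Zq \<noteq> 0"
      and C1: "C1 * Zq = Bz * Ba - B1 * B5 * q"
    for K1 Az Aq Ak Akz Aka Aaq W C1 Bz Ba Zq B1 B5 :: complex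
  proof -
    have "Az*Aka*W/(Akz*Aaq*(Zq/z)) - (Az*B1)*(Aka*(B5/a))*(W*(q*a/z))/((Akz*(Bz/z))*(Aaq*Ba)*(Zq/z))
        = Az*Aka*W*z*(Bz*Ba - B1*B5*q)/(Akz*Aaq*Zq*Bz*Ba)"
      using that z_nonzero a_nonzero by (simp add: field_simps)
    also have "\<dots> = C1/K1 * Az * Aq/(Ak*(Akz*(Bz/z))) * W * (Aka*(K1*Ak)/(Aq*(Aaq*Ba)))"
      unfolding C1[symmetric] using that z_nonzero by (simp add: field_simps)
    finally show ?thesis by simp
  qed
  have inner: "inner_term 1 m = (1 - k * q ^ (2 * Suc m)) / (1 - k) * qpoch z q (Suc m) * qpoch q q m
      / (qpoch (q * k) q (Suc m) * qpoch (q * k / z) q (Suc m)) * (q * a / z) ^ Suc m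
      * (qpoch (k / a) q m * qpoch k q (Suc (Suc m)) / (qpoch q q m * qpoch (a * q) q (Suc (Suc m))))"
    unfolding inner_term_def beta_weight_def wp_kernel_def by simp
  have base1: "base_telescoper (Suc m) = qpoch z q (Suc m) * qpoch (k / a) q m * (q * a / z) ^ Suc m
      / (qpoch (q * k / z) q m * qpoch (a * q) q (Suc m) * (1 - q * a / z))"
    unfolding base_telescoper_def by simp
  have base2: "base_telescoper (Suc (Suc m))
      = qpoch z q (Suc (Suc m)) * qpoch (k / a) q (Suc m) * (q * a / z) ^ Suc (Suc m)
        / (qpoch (q * k / z) q (Suc m) * qpoch (a * q) q (Suc (Suc m)) * (1 - q * a / z))"
    unfolding base_telescoper_def by simp
  have qaz: "1 - q * a / z = (z - q * a) / z"
    using z_nonzero by (simp add: field_simps)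
  show ?thesis
    unfolding qaz inner base1 base2 qpoch_qkz_Suc qpoch_Suc_left[of k q "Suc m"] qpoch_ka_Suc
      qpoch_Suc[of "a * q" q "Suc m"] qpoch_Suc[of z q "Suc m"] power_Suc2[of _ "Suc m"]
    by (rule field_identity[OF _ _ _ _ _ _ _ _ base_telescoping_numerator])
      (use k_ne_1 qpoch_qk_nonzero qpoch_q_nonzero qpoch_qkz_nonzero qpoch_aq_nonzero
        factor_qkz_nonzero factor_aq_nonzero[of "Suc m"] z_minus_qa_nonzero in simp_all)
qed

lemma norm_qaz_less_1: "norm (q * a / z) < 1"
  using norm_qa_less z_nonzero by (simp add: norm_divide divide_less_eq)

lemma norm_qpoch_le_exp: "norm (qpoch x q n) \<le> exp (norm x / (1 - norm q))"
  by (rule norm_qpoch_le[OF norm_q order_refl])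

lemma qpoch_inverse_uniform_bound:
  obtains M where "\<And>n. norm (inverse (qpoch q q n)) \<le> M" "\<And>n. norm (inverse (qpoch (a * q) q n)) \<le> M"
    "\<And>n. norm (inverse (qpoch (q * k) q n)) \<le> M" "\<And>n. norm (inverse (qpoch (q * k / z) q n)) \<le> M"
proof -
  obtain M1 M2 M3 M4 where M:
    "\<And>n. norm (inverse (qpoch q q n)) \<le> M1" "\<And>n. norm (inverse (qpoch (a * q) q n)) \<le> M2"
    "\<And>n. norm (inverse (qpoch (q * k) q n)) \<le> M3" "\<And>n. norm (inverse (qpoch (q * k / z) q n)) \<le> M4"
    using qpoch_inverse_bounded[OF norm_q] qpoch_q_nonzero qpoch_aq_nonzero qpoch_qk_nonzero
      qpoch_qkz_nonzero by metis
  show ?thesis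
    using M by (intro that[of "max (max M1 M2) (max M3 M4)"]) (simp_all add: le_max_iff_disj)
qed

lemma base_telescoper_tendsto_0: "(\<lambda>m. base_telescoper (Suc m)) \<longlonglongrightarrow> 0"
proof -
  obtain M where M: "\<And>n. norm (inverse (qpoch (a * q) q n)) \<le> M"
    "\<And>n. norm (inverse (qpoch (q * k / z) q n)) \<le> M"
    using qpoch_inverse_uniform_bound by metis
  define C where "C = exp (norm z / (1 - norm q)) * exp (norm (k / a) / (1 - norm q))
    * (M * M * norm (inverse (1 - q * a / z))) * norm (q * a / z)"
  have "norm (base_telescoper (Suc m)) \<le> C * norm (q * a / z) ^ m" for m
  proof -
    have "norm (base_telescoper (Suc m)) \<le> exp (norm z / (1 - norm q)) * exp (norm (k / a) / (1 - norm q))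
        * norm (q * a / z) ^ Suc m * (M * M * norm (inverse (1 - q * a / z)))"
      unfolding base_telescoper_def
      by (intro norm_le_mult_intros norm_qpoch_le_exp M order_refl)
    then show ?thesis by (simp add: C_def mult_ac)
  qed
  then show ?thesis
    by (rule geometric_bound_tendsto_zero) (use norm_qaz_less_1 in auto)
qed

lemma step_telescoper_tendsto_0: "(\<lambda>m. step_telescoper j m) \<longlonglongrightarrow> 0"
proof -
  obtain M where M: "\<And>n. norm (inverse (qpoch q q n)) \<le> M" "\<And>n. norm (inverse (qpoch (a * q) q n)) \<le> M"
    "\<And>n. norm (inverse (qpoch (q * k) q n)) \<le> M" "\<And>n. norm (inverse (qpoch (q * k / z) q n)) \<le> M"
    using qpoch_inverse_uniform_bound by metis
  define K where "K = - (1 - a * q * q ^ j * q ^ j) * z / ((1 - a * q * q ^ j) * (z - a * q * q ^ j))"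
  define C where "C = norm K * (exp (norm z / (1 - norm q)) * exp (norm q / (1 - norm q))
    * (norm (inverse (1 - k)) * M * M) * exp (norm (k / a) / (1 - norm q)) * exp (norm k / (1 - norm q))
    * (M * M)) * norm (q * a / z) ^ Suc j"
  have "norm (step_telescoper j m) \<le> C * norm (q * a / z) ^ m" for m
  proof -
    have core: "norm (telescoper_core j m) \<le> exp (norm z / (1 - norm q)) * exp (norm q / (1 - norm q))
        * norm (q * a / z) ^ Suc (j + m) * (norm (inverse (1 - k)) * M * M)
        * exp (norm (k / a) / (1 - norm q)) * exp (norm k / (1 - norm q)) * (M * M)"
      unfolding telescoper_core_def
      by (intro norm_le_mult_intros norm_qpoch_le_exp M order_refl)
    have "norm (step_telescoper j m) = norm K * norm (telescoper_core j m)"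
      unfolding step_telescoper_def K_def[symmetric] by (rule norm_mult)
    also have "\<dots> \<le> norm K * (exp (norm z / (1 - norm q)) * exp (norm q / (1 - norm q))
        * norm (q * a / z) ^ Suc (j + m) * (norm (inverse (1 - k)) * M * M)
        * exp (norm (k / a) / (1 - norm q)) * exp (norm k / (1 - norm q)) * (M * M))"
      by (rule mult_left_mono[OF core]) simp
    also have "\<dots> = C * norm (q * a / z) ^ m"
      by (simp add: C_def power_add mult_ac)
    finally show ?thesis .
  qed
  then show ?thesis
    by (rule geometric_bound_tendsto_zero) (use norm_qaz_less_1 in auto)
qed

lemma inner_term_sums: "inner_term (Suc i) sums alpha_weight (Suc i)"
proof (induction i)
  case 0
  have "(\<lambda>m. base_telescoper (Suc m) - base_telescoper (Suc (Suc m))) sums (base_telescoper (Suc 0) - 0)"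
    by (rule telescope_sums'[OF base_telescoper_tendsto_0])
  then show ?case
    using inner_term_1 base_telescoper_1 by simp
next
  case (Suc i)
  define j where "j = Suc i"
  define \<rho> where "\<rho> = alpha_weight_ratio j"
  have "(\<lambda>m. step_telescoper j (Suc m) - step_telescoper j m) sums (0 - step_telescoper j 0)"
    by (rule telescope_sums[OF step_telescoper_tendsto_0])
  then have "(\<lambda>m. inner_term (Suc j) m - \<rho> * inner_term j (Suc m)) sums (\<rho> * inner_term j 0)"
    by (simp add: inner_term_step_telescopes step_telescoper_0 j_def \<rho>_def)
  moreover have "(\<lambda>m. \<rho> * inner_term j (Suc m)) sums (\<rho> * (alpha_weight j - inner_term j 0))"
    using Suc.IH sums_Suc_iff[of "inner_term j"] by (intro sums_mult) (simp add: j_def)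
  ultimately have "inner_term (Suc j) sums (\<rho> * alpha_weight j)"
    using sums_add by (fastforce simp: algebra_simps)
  then show ?case
    by (simp add: alpha_weight_Suc j_def \<rho>_def)
qed

definition inner_term_quotient :: "nat \<Rightarrow> nat \<Rightarrow> complex" where
  "inner_term_quotient i m = qpoch (q * a) q (Suc i) * qpoch (q * a / z) q (Suc i)
     * ((1 - k * q ^ (2 * (Suc i + m))) / (1 - k)) * qpoch (z * q ^ Suc i) q m * qpoch (q * q ^ i) q m
     / (qpoch (q * k) q (Suc i + m) * qpoch (q * k / z) q (Suc i + m))
     * (q * a / z) ^ m * wp_kernel (Suc i + m) (Suc i)"

lemma inner_term_factor: "inner_term (Suc i) m = alpha_weight (Suc i) * inner_term_quotient i m"
proof -
  have field_identity: "E1/K1 * (Az*Az2) * (Aq*Aq2) / (Ak*Akz) * (W1*W2) * C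
      = Az*Aq/(Ha*Hz)*W1 * (Ha * Hz * (E1/K1) * Az2 * Aq2 / (Ak*Akz) * W2 * C)"
    if "Ha \<noteq> 0" "Hz \<noteq> 0" for E1 K1 Az Az2 Aq Aq2 Ak Akz W1 W2 C Ha Hz :: complex
    using that by (simp add: field_simps)
  have split: "qpoch q q (Suc i + m - 1) = qpoch q q i * qpoch (q * q ^ i) q m"
    using qpoch_add[of q q i m] by simp
  show ?thesis
    unfolding inner_term_def beta_weight_def alpha_weight_def inner_term_quotient_def
      qpoch_add[of z q "Suc i" m] power_add[of _ "Suc i" m] split diff_Suc_1
    by (rule field_identity) (use qpoch_qa_nonzero qpoch_qaz_nonzero in auto)
qed

lemma inner_term_quotient_bound:
  obtains C where "\<And>i m. norm (inner_term_quotient i m) \<le> C * norm (q * a / z) ^ m"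
proof -
  obtain M where M: "\<And>n. norm (inverse (qpoch q q n)) \<le> M" "\<And>n. norm (inverse (qpoch (a * q) q n)) \<le> M"
    "\<And>n. norm (inverse (qpoch (q * k) q n)) \<le> M" "\<And>n. norm (inverse (qpoch (q * k / z) q n)) \<le> M"
    using qpoch_inverse_uniform_bound by metis
  define U where "U x = exp (x / (1 - norm q))" for x
  have small: "norm (q ^ i) \<le> 1" for i
    using norm_q by (simp add: norm_power power_le_one)
  define C where "C = U (norm (q * a)) * U (norm (q * a / z)) * ((1 + norm k) * norm (inverse (1 - k)))
    * U (norm z) * U 1 * (M * M) * (U (norm (k / a)) * U (norm k) * (M * M))"
  have "norm (inner_term_quotient i m) \<le> U (norm (q * a)) * U (norm (q * a / z))
      * ((1 + norm k) * norm (inverse (1 - k))) * U (norm z) * U 1 * (M * M) * norm (q * a / z) ^ m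
      * (U (norm (k / a)) * U (norm k) * (M * M))" for i m
  proof -
    have "norm (qpoch (z * q ^ Suc i) q m) \<le> U (norm z)"
      unfolding U_def using small[of "Suc i"]
      by (intro norm_qpoch_le[OF norm_q]) (simp add: norm_mult mult_left_le)
    moreover have "norm (qpoch (q * q ^ i) q m) \<le> U 1"
      unfolding U_def using small[of "Suc i"] by (intro norm_qpoch_le[OF norm_q]) simp
    moreover have "norm (1 - k * q ^ (2 * (Suc i + m))) \<le> 1 + norm k"
      using norm_q by (intro norm_one_minus_mult_power_le) simp
    ultimately show ?thesis
      unfolding inner_term_quotient_def wp_kernel_def
      by (intro norm_le_mult_intros M order_refl) (auto simp: U_def norm_qpoch_le_exp)
  qed
  then have "norm (inner_term_quotient i m) \<le> C * norm (q * a / z) ^ m" for i m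
    by (simp add: C_def mult_ac)
  then show ?thesis
    by (rule that)
qed

lemma inner_term_bound:
  obtains C where "\<And>i m. norm (inner_term (Suc i) m) \<le> C * norm (alpha_weight (Suc i)) * norm (q * a / z) ^ m"
proof -
  obtain C where C: "\<And>i m. norm (inner_term_quotient i m) \<le> C * norm (q * a / z) ^ m"
    using inner_term_quotient_bound by metis
  show ?thesis
  proof (rule that)
    fix i m
    have "norm (inner_term (Suc i) m) = norm (alpha_weight (Suc i)) * norm (inner_term_quotient i m)"
      by (simp add: inner_term_factor norm_mult)
    also have "\<dots> \<le> norm (alpha_weight (Suc i)) * (C * norm (q * a / z) ^ m)"
      by (rule mult_left_mono[OF C]) simp
    finally show "norm (inner_term (Suc i) m) \<le> C * norm (alpha_weight (Suc i)) * norm (q * a / z) ^ m"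
      by (simp add: mult_ac)
  qed
qed

lemma inner_term_row:
  fixes i :: nat and c :: complex
  assumes C: "\<And>m. norm (inner_term (Suc i) m) \<le> C * norm (alpha_weight (Suc i)) * norm (q * a / z) ^ m"
  defines "g \<equiv> \<lambda>n. if i \<le> n then inner_term (Suc i) (n - i) * c else 0"
  shows "g sums (alpha_weight (Suc i) * c)" and "summable (\<lambda>n. norm (g n))"
    and "(\<Sum>n. norm (g n)) \<le> C / (1 - norm (q * a / z)) * norm (alpha_weight (Suc i) * c)"
proof -
  have "norm (inner_term (Suc i) m * c) \<le> C * norm (alpha_weight (Suc i) * c) * norm (q * a / z) ^ m" for m
    using mult_right_mono[OF C[of m] norm_ge_zero[of c]] by (simp add: norm_mult mult_ac)
  from delayed_series_geometric_bound[OF sums_mult2[OF inner_term_sums[of i]] this _ norm_qaz_less_1,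
      where i = i]
  show "g sums (alpha_weight (Suc i) * c)" "summable (\<lambda>n. norm (g n))"
    "(\<Sum>n. norm (g n)) \<le> C / (1 - norm (q * a / z)) * norm (alpha_weight (Suc i) * c)"
    unfolding g_def by simp_all
qed

section \<open>Interchange of summation\<close>

lemma beta_weight_times_beta:
  assumes "WP_Bailey_pair a k q \<alpha> \<beta>"
  shows "beta_weight (Suc n) * \<beta> (Suc n)
    = beta_weight (Suc n) * wp_kernel (Suc n) 0 + (\<Sum>i\<le>n. inner_term (Suc i) (n - i) * \<alpha> (Suc i))"
proof -
  have "\<beta> (Suc n) = (\<Sum>j\<le>Suc n. wp_kernel (Suc n) j * \<alpha> j)"
    using assms unfolding WP_Bailey_pair_def wp_kernel_def by (simp add: atLeast0AtMost)
  also have "\<dots> = wp_kernel (Suc n) 0 + (\<Sum>i\<le>n. wp_kernel (Suc n) (Suc i) * \<alpha> (Suc i))"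
    using assms unfolding WP_Bailey_pair_def sum.atMost_Suc_shift by simp
  finally show ?thesis
    by (simp add: inner_term_def distrib_left sum_distrib_left mult_ac)
qed

lemma beta_alpha_series_identity:
  assumes WP: "WP_Bailey_pair a k q \<alpha> \<beta>"
    and summable_beta: "summable (\<lambda>n. norm (beta_weight (Suc n) * \<beta> (Suc n)))"
    and summable_alpha: "summable (\<lambda>n. norm (alpha_weight (Suc n) * \<alpha> (Suc n)))"
    and summable_kernel: "summable (\<lambda>n. norm (beta_weight (Suc n) * wp_kernel (Suc n) 0))"
  shows "(\<Sum>n. beta_weight (Suc n) * \<beta> (Suc n)) - (\<Sum>n. alpha_weight (Suc n) * \<alpha> (Suc n))
       = (\<Sum>n. beta_weight (Suc n) * wp_kernel (Suc n) 0)"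
proof -
  obtain C where C: "\<And>i m. norm (inner_term (Suc i) m) \<le> C * norm (alpha_weight (Suc i)) * norm (q * a / z) ^ m"
    using inner_term_bound by metis
  define p where "p i n = (if i \<le> n then inner_term (Suc i) (n - i) * \<alpha> (Suc i) else 0)" for i n
  have row: "p i sums (alpha_weight (Suc i) * \<alpha> (Suc i))" "summable (\<lambda>n. norm (p i n))"
    "(\<Sum>n. norm (p i n)) \<le> C / (1 - norm (q * a / z)) * norm (alpha_weight (Suc i) * \<alpha> (Suc i))"
    for i using inner_term_row[OF C, of i "\<alpha> (Suc i)"] by (simp_all add: p_def[abs_def])
  have dominated: "summable (\<lambda>i. \<Sum>n. norm (p i n))"
    by (rule summable_comparison_test'[OF summable_mult[OF summable_alpha, of "C / (1 - norm (q * a / z))"]])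
      (use row in \<open>simp add: suminf_nonneg\<close>)
  have swapped: "(\<lambda>n. \<Sum>i\<le>n. p i n) sums (\<Sum>i. alpha_weight (Suc i) * \<alpha> (Suc i))"
    by (rule triangular_double_series_sums[OF _ row(1,2) dominated]) (simp add: p_def)
  have diagonal: "(\<lambda>n. \<Sum>i\<le>n. p i n)
      = (\<lambda>n. beta_weight (Suc n) * \<beta> (Suc n) - beta_weight (Suc n) * wp_kernel (Suc n) 0)"
    using beta_weight_times_beta[OF WP] by (simp add: p_def)
  have "(\<lambda>n. beta_weight (Suc n) * \<beta> (Suc n) - beta_weight (Suc n) * wp_kernel (Suc n) 0)
      sums ((\<Sum>n. beta_weight (Suc n) * \<beta> (Suc n)) - (\<Sum>n. beta_weight (Suc n) * wp_kernel (Suc n) 0))"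
    by (intro sums_diff summable_sums summable_norm_cancel[OF summable_beta]
        summable_norm_cancel[OF summable_kernel])
  from sums_unique2[OF this swapped[unfolded diagonal]]
  have "(\<Sum>n. beta_weight (Suc n) * \<beta> (Suc n)) - (\<Sum>n. beta_weight (Suc n) * wp_kernel (Suc n) 0)
      = (\<Sum>i. alpha_weight (Suc i) * \<alpha> (Suc i))" .
  then show ?thesis
    by (simp add: algebra_simps)
qed

lemma well_poised_factor:
  "qpoch (q * csqrt k) q N * qpoch (- q * csqrt k) q N / (qpoch (csqrt k) q N * qpoch (- csqrt k) q N)
    = (1 - k * q ^ (2 * N)) / (1 - k)"
  using qpoch_well_poised_ratio[OF qpoch_sqrt_nonzero qpoch_neg_sqrt_nonzero sqrt_factors_nonzero]
  by simp

lemma beta_summand_eq: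
  "qpoch (q * csqrt k) q (Suc n) * qpoch (- q * csqrt k) q (Suc n) * qpoch z q (Suc n) * qpoch q q n
     / (qpoch (csqrt k) q (Suc n) * qpoch (- csqrt k) q (Suc n) * qpoch (q * k) q (Suc n)
        * qpoch (q * k / z) q (Suc n)) * (q * a / z) ^ Suc n
   = beta_weight (Suc n)"
proof -
  have regroup: "A * B * Z * Q / (qpoch (csqrt k) q (Suc n) * qpoch (- csqrt k) q (Suc n) * K * KZ) * W
      = A * B / (qpoch (csqrt k) q (Suc n) * qpoch (- csqrt k) q (Suc n)) * Z * Q / (K * KZ) * W"
    for A B Z Q K KZ W :: complex
    using qpoch_sqrt_nonzero[of "Suc n"] qpoch_neg_sqrt_nonzero[of "Suc n"] by (simp add: field_simps)
  show ?thesis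
    unfolding regroup well_poised_factor beta_weight_def by simp
qed

lemma alpha_summand_eq:
  "qpoch z q (Suc n) * qpoch q q n / (qpoch (q * a) q (Suc n) * qpoch (q * a / z) q (Suc n))
     * (q * a / z) ^ Suc n = alpha_weight (Suc n)"
  by (simp add: alpha_weight_def)

lemma kernel_summand_eq:
  "qpoch (q * csqrt k) q (Suc n) * qpoch (- q * csqrt k) q (Suc n) * qpoch k q (Suc n)
     * qpoch z q (Suc n) * qpoch (k / a) q (Suc n)
     / (qpoch (csqrt k) q (Suc n) * qpoch (- csqrt k) q (Suc n) * qpoch (q * k) q (Suc n)
        * qpoch (q * k / z) q (Suc n) * qpoch (q * a) q (Suc n) * (1 - q ^ Suc n)) * (q * a / z) ^ Suc n
   = beta_weight (Suc n) * wp_kernel (Suc n) 0"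
proof -
  have regroup: "A * B * Kk * Z * KA / (C * D * K * KZ * QA * F) * W
      = (A * B / (C * D)) * Z * Qn / (K * KZ) * W * (KA * Kk / ((Qn * F) * QA))"
    if "C \<noteq> 0" "D \<noteq> 0" "K \<noteq> 0" "KZ \<noteq> 0" "Qn \<noteq> 0" "QA \<noteq> 0" "F \<noteq> 0"
    for A B C D Z Qn K KZ W KA Kk QA F :: complex
    using that by (simp add: field_simps)
  have F: "1 - q ^ Suc n \<noteq> 0"
    using factor_q_nonzero[of n] by simp
  have "qpoch q q (Suc n) = qpoch q q n * (1 - q ^ Suc n)"
    by (simp add: qpoch_Suc)
  then show ?thesis
    unfolding regroup[OF qpoch_sqrt_nonzero qpoch_neg_sqrt_nonzero qpoch_qk_nonzero qpoch_qkz_nonzero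
      qpoch_q_nonzero[of n] qpoch_qa_nonzero F] well_poised_factor beta_weight_def wp_kernel_def
    by (simp add: mult.commute[of a q])
qed

end

theorem lemma2p1:
  fixes a k q z :: complex and \<alpha> \<beta> :: "nat \<Rightarrow> complex"
  assumes hq: "norm q < 1"
    and hWP: "WP_Bailey_pair a k q \<alpha> \<beta>"
    and hz: "norm (q * a) < norm z"
    and ha: "a \<noteq> 0"
    and hden1: "\<And>n. qpoch q q n \<noteq> 0"
    and hden2: "\<And>n. qpoch (a * q) q n \<noteq> 0"
    and hden3: "\<And>n. qpoch (csqrt k) q n * qpoch (- csqrt k) q n * qpoch (q * k) q n
                        * qpoch (q * k / z) q n \<noteq> 0"
    and hden4: "\<And>n. qpoch (q * a) q n * qpoch (q * a / z) q n \<noteq> 0"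
    and hden5: "\<And>n. n \<ge> 1 \<Longrightarrow> 1 - q ^ n \<noteq> 0"
    and hconv1: "summable (\<lambda>n. norm (
        qpoch (q * csqrt k) q (Suc n) * qpoch (- q * csqrt k) q (Suc n) * qpoch z q (Suc n)
          * qpoch q q n
        / (qpoch (csqrt k) q (Suc n) * qpoch (- csqrt k) q (Suc n) * qpoch (q * k) q (Suc n)
           * qpoch (q * k / z) q (Suc n))
        * (q * a / z) ^ Suc n * \<beta> (Suc n)))"
    and hconv2: "summable (\<lambda>n. norm (
        qpoch z q (Suc n) * qpoch q q n / (qpoch (q * a) q (Suc n) * qpoch (q * a / z) q (Suc n))
        * (q * a / z) ^ Suc n * \<alpha> (Suc n)))"
    and hconv3: "summable (\<lambda>n. norm (
        qpoch (q * csqrt k) q (Suc n) * qpoch (- q * csqrt k) q (Suc n) * qpoch k q (Suc n)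
          * qpoch z q (Suc n) * qpoch (k / a) q (Suc n)
        / (qpoch (csqrt k) q (Suc n) * qpoch (- csqrt k) q (Suc n) * qpoch (q * k) q (Suc n)
           * qpoch (q * k / z) q (Suc n) * qpoch (q * a) q (Suc n) * (1 - q ^ Suc n))
        * (q * a / z) ^ Suc n))"
  shows "(\<Sum>n. qpoch (q * csqrt k) q (Suc n) * qpoch (- q * csqrt k) q (Suc n) * qpoch z q (Suc n)
          * qpoch q q n
        / (qpoch (csqrt k) q (Suc n) * qpoch (- csqrt k) q (Suc n) * qpoch (q * k) q (Suc n)
           * qpoch (q * k / z) q (Suc n))
        * (q * a / z) ^ Suc n * \<beta> (Suc n))
       - (\<Sum>n. qpoch z q (Suc n) * qpoch q q n
            / (qpoch (q * a) q (Suc n) * qpoch (q * a / z) q (Suc n))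
        * (q * a / z) ^ Suc n * \<alpha> (Suc n))
       = (\<Sum>n. qpoch (q * csqrt k) q (Suc n) * qpoch (- q * csqrt k) q (Suc n) * qpoch k q (Suc n)
          * qpoch z q (Suc n) * qpoch (k / a) q (Suc n)
        / (qpoch (csqrt k) q (Suc n) * qpoch (- csqrt k) q (Suc n) * qpoch (q * k) q (Suc n)
           * qpoch (q * k / z) q (Suc n) * qpoch (q * a) q (Suc n) * (1 - q ^ Suc n))
        * (q * a / z) ^ Suc n)"
proof -
  interpret wp_parameters a k q z
    using hden3 hden4 by unfold_locales (use hq hz ha hden1 hden2 in auto)
  show ?thesis
    using beta_alpha_series_identity[OF hWP] hconv1 hconv2 hconv3
    unfolding beta_summand_eq alpha_summand_eq kernel_summand_eq by blast
qed

end
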